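(* Let $i\ge 3$ and $k\ge 3$ be integers, let $p$ be a nonnegative integer, and put $r=\lfloor (L_i-1)/F_k\rfloor$. If $r\ge p$ and $(r,p)\ne(0,0)$, then $$g_p(L_i,L_{i+2},L_{i+k})=\begin{cases}(L_i-rF_k-1)L_{i+2}+(r+p)L_{i+k}-L_i & \text{if } (L_i-rF_k)L_{i+2}\ge F_{k-2}L_i,\\ (F_k-1)L_{i+2}+(r+p-1)L_{i+k}-L_i & \text{if } (L_i-rF_k)L_{i+2}< F_{k-2}L_i.\end{cases}$$
   Context: Fibonacci numbers: $F_0=0$, $F_1=1$, $F_n=F_{n-1}+F_{n-2}$. Lucas numbers: $L_0=2$, $L_1=1$, $L_n=L_{n-1}+L_{n-2}$. For positive integers $a_1,\dots,a_l$ with $\gcd(a_1,\dots,a_l)=1$ and an integer $n$, let $d(n;a_1,\dots,a_l)$ be the number of tuples $(x_1,\dots,x_l)$ of nonnegative integers with $a_1x_1+\dots+a_lx_l=n$. For a nonnegative integer $p$, the $p$-Frobenius number $g_p(a_1,\dots,a_l)$ is the largest integer $n$ with $d(n;a_1,\dots,a_l)\le p$. *)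

theory Defs
  imports Main "HOL-Number_Theory.Fib"
begin

fun lucas :: "nat \<Rightarrow> nat" where
  "lucas 0 = 2"
| "lucas (Suc 0) = 1"
| "lucas (Suc (Suc n)) = lucas (Suc n) + lucas n"

definition num_repr :: "int \<Rightarrow> nat list \<Rightarrow> nat" where
  "num_repr n as = card {xs :: nat list. length xs = length as \<and>
       int (\<Sum>j<length as. as ! j * xs ! j) = n}"

definition p_frobenius :: "nat \<Rightarrow> nat list \<Rightarrow> int" where
  "p_frobenius p as = (GREATEST n :: int. num_repr n as \<le> p)"

end

theory Submission
  imports Defs
begin

(*
  Put a = L_i, b = L_(i+2), c = L_(i+k), f = F_k, e = F_(k-2). The Lucas identity
  c = f b - e a together with 2 e a <= f b and gcd(a, b) = 1 is all that is used, so the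
  problem becomes one about integers a, b, c with c = f b - e a, in which the representations
  of n lie on chains along the relation vector (e, -f, 1).
  For each of the two values g in the case distinction, reducing a x + b y + c z = g modulo a
  forces y + f z to a fixed value below f p, so z < p determines the representation and there
  are at most p of them. For every larger n, writing n = s b + w a with 0 <= s < a exhibits
  p + 1 representations explicitly. Hence g_p is the larger of the two values, which is the
  stated case distinction.
*)

lemma lucas_add_fib: "lucas (i + k + 2) + fib k * lucas i = fib (k + 2) * lucas (i + 2)"
proof (induction k rule: fib.induct)
  case (3 n)
  have "lucas (i + Suc (Suc n) + 2) = lucas (i + Suc n + 2) + lucas (i + n + 2)"
    and "fib (Suc (Suc n) + 2) = fib (Suc n + 2) + fib (n + 2)"
    by (simp_all add: numeral_eq_Suc)
  with 3 show ?case
    by (simp only: fib.simps(3) distrib_right)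
qed (simp_all add: numeral_eq_Suc)

lemma lucas_add_eq:
  assumes "2 \<le> k"
  shows "int (lucas (i + k)) = int (fib k) * int (lucas (i + 2)) - int (fib (k - 2)) * int (lucas i)"
proof -
  obtain j where k: "k = j + 2"
    using assms by (metis add.commute le_Suc_ex numeral_2_eq_2 add_2_eq_Suc)
  have "lucas (i + k) + fib (k - 2) * lucas i = fib k * lucas (i + 2)"
    using lucas_add_fib[of i j] unfolding k by (simp add: add.assoc)
  then show ?thesis
    by (metis add_diff_cancel_right' of_nat_add of_nat_mult)
qed

lemma coprime_lucas_Suc: "coprime (lucas n) (lucas (Suc n))"
proof (induction n)
  case (Suc n)
  then show ?case
    by (metis coprime_iff_gcd_eq_1 gcd.commute gcd_add2 lucas.simps(3))
qed simp

lemma coprime_lucas_add2: "coprime (lucas n) (lucas (n + 2))"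
proof -
  have "lucas (n + 2) = lucas (Suc n) + lucas n"
    by (simp add: numeral_eq_Suc)
  then show ?thesis
    using coprime_lucas_Suc[of n] by (metis coprime_iff_gcd_eq_1 gcd_add2 gcd.commute add.commute)
qed

lemma two_fib_lucas_le:
  assumes "2 \<le> k"
  shows "2 * fib (k - 2) * lucas i \<le> fib k * lucas (i + 2)"
proof -
  have "fib k = fib (k - 1) + fib (k - 2)"
    using assms fib_plus_2[of "k - 2"] by (simp add: numeral_eq_Suc Suc_diff_Suc)
  moreover have "fib (k - 2) \<le> fib (k - 1)"
    by (rule fib_mono) simp
  ultimately have "2 * fib (k - 2) \<le> fib k"
    by simp
  moreover have "lucas i \<le> lucas (i + 2)"
    by (simp add: numeral_eq_Suc)
  ultimately show ?thesis
    by (intro mult_mono) simp_all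
qed

definition reprs :: "int \<Rightarrow> int \<Rightarrow> int \<Rightarrow> int \<Rightarrow> (int \<times> int \<times> int) set" where
  "reprs a b c n = {(x, y, z). 0 \<le> x \<and> 0 \<le> y \<and> 0 \<le> z \<and> a*x + b*y + c*z = n}"

lemma num_repr_eq_card_reprs:
  "num_repr n [a, b, c] = card (reprs (int a) (int b) (int c) n)"
proof -
  let ?to_list = "\<lambda>(x :: int, y :: int, z :: int). [nat x, nat y, nat z]"
  have sum3: "(\<Sum>j<length [a, b, c]. [a, b, c] ! j * xs ! j) = a * xs!0 + b * xs!1 + c * xs!2"
    for xs :: "nat list"
    by (simp add: eval_nat_numeral)
  have "{xs. length xs = length [a, b, c] \<and> int (\<Sum>j<length [a, b, c]. [a, b, c] ! j * xs ! j) = n}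
      = ?to_list ` reprs (int a) (int b) (int c) n"
  proof (intro equalityI subsetI)
    fix xs
    assume "xs \<in> {xs. length xs = length [a, b, c]
        \<and> int (\<Sum>j<length [a, b, c]. [a, b, c] ! j * xs ! j) = n}"
    then have len: "length xs = 3" and eq: "int (a * xs!0 + b * xs!1 + c * xs!2) = n"
      by (simp_all only: sum3 mem_Collect_eq) simp
    have "xs = [xs!0, xs!1, xs!2]"
      using len by (auto simp: numeral_eq_Suc length_Suc_conv)
    moreover have "(int (xs!0), int (xs!1), int (xs!2)) \<in> reprs (int a) (int b) (int c) n"
      using eq by (simp add: reprs_def algebra_simps)
    ultimately show "xs \<in> ?to_list ` reprs (int a) (int b) (int c) n"
      by (intro image_eqI[of _ _ "(int (xs!0), int (xs!1), int (xs!2))"]) simp_all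
  next
    fix xs
    assume "xs \<in> ?to_list ` reprs (int a) (int b) (int c) n"
    then obtain x y z where "xs = [nat x, nat y, nat z]" "0 \<le> x" "0 \<le> y" "0 \<le> z"
      "int a * x + int b * y + int c * z = n"
      by (auto simp: reprs_def)
    then show "xs \<in> {xs. length xs = length [a, b, c]
        \<and> int (\<Sum>j<length [a, b, c]. [a, b, c] ! j * xs ! j) = n}"
      by (simp only: sum3 mem_Collect_eq) (simp add: algebra_simps)
  qed
  moreover have "inj_on ?to_list (reprs (int a) (int b) (int c) n)"
    by (auto simp: inj_on_def reprs_def)
  ultimately show ?thesis
    unfolding num_repr_def by (simp add: card_image)
qed

lemma finite_reprs:
  assumes "0 < a" "0 < b" "0 < c"
  shows "finite (reprs a b c n)"
proof -
  have "(x, y, z) \<in> {0..n} \<times> {0..n} \<times> {0..n}" if "(x, y, z) \<in> reprs a b c n" for x y z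
  proof -
    from that have "0 \<le> x" "0 \<le> y" "0 \<le> z" "a*x + b*y + c*z = n"
      by (auto simp: reprs_def)
    moreover have "x \<le> a*x" "y \<le> b*y" "z \<le> c*z"
      using assms calculation by (simp_all add: mult_le_cancel_right1)
    moreover have "0 \<le> a*x" "0 \<le> b*y" "0 \<le> c*z"
      using assms calculation by simp_all
    ultimately show ?thesis
      by auto
  qed
  then have "reprs a b c n \<subseteq> {0..n} \<times> {0..n} \<times> {0..n}"
    by auto
  then show ?thesis
    by (rule finite_subset) simp
qed

lemma card_reprs_le:
  fixes a b c f m n S :: int
  assumes a: "0 < a" and f: "0 < f" and S: "S < f*m"
    and sum_eq: "\<And>x y z. (x, y, z) \<in> reprs a b c n \<Longrightarrow> y + f*z = S"
  shows "card (reprs a b c n) \<le> nat m"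
proof -
  have "inj_on (\<lambda>(x, y, z). nat z) (reprs a b c n)"
  proof (rule inj_onI)
    fix t t'
    assume r: "t \<in> reprs a b c n" and r': "t' \<in> reprs a b c n"
      and "(\<lambda>(x, y, z). nat z) t = (\<lambda>(x, y, z). nat z) t'"
    moreover obtain x y z x' y' z' where t: "t = (x, y, z)" and t': "t' = (x', y', z')"
      by (metis prod_cases3)
    ultimately have zz: "z = z'"
      by (auto simp: reprs_def)
    with sum_eq[of x y z] sum_eq[of x' y' z'] r r' have yy: "y = y'"
      unfolding t t' by simp
    from r r' have "a*x = a*x'"
      unfolding t t' zz yy reprs_def by auto
    with a show "t = t'"
      unfolding t t' zz yy by simp
  qed
  moreover have "nat z < nat m" if r: "(x, y, z) \<in> reprs a b c n" for x y z
  proof -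
    from r have "f*z < f*m"
      using sum_eq[OF r] S by (auto simp: reprs_def)
    with f r show ?thesis
      by (auto simp: reprs_def)
  qed
  then have "(\<lambda>(x, y, z). nat z) ` reprs a b c n \<subseteq> {..<nat m}"
    by auto
  ultimately show ?thesis
    by (metis card_inj_on_le card_lessThan finite_lessThan)
qed

lemma coprime_repr_bounded:
  fixes a b n :: int
  assumes "0 < a" "coprime a b"
  obtains s w where "n = s*b + w*a" "0 \<le> s" "s < a"
proof -
  obtain u v where uv: "u*a + v*b = 1"
    using bezout_int[of a b] assms(2) by (auto simp: coprime_iff_gcd_eq_1)
  have "n = n*(u*a + v*b)"
    using uv by simp
  also have "\<dots> = (n*v) mod a * b + (n*u + (n*v) div a * b) * a"
    by (simp add: minus_div_mult_eq_mod[symmetric] algebra_simps)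
  finally have "n = (n*v) mod a * b + (n*u + (n*v) div a * b) * a" .
  then show thesis
    using assms(1) by (intro that[of "(n*v) mod a" "n*u + (n*v) div a * b"]) simp_all
qed

lemma reprs_mod_a:
  fixes a b c e f M N x y z :: int
  assumes a: "0 < a" and cop: "coprime a b" and c: "c = f*b - e*a"
    and eq: "a*x + b*y + c*z = N*b - M*a*e - a"
  obtains t where "N - (y + f*z) = a*t" and "x - z*e + M*e + 1 = t*b"
proof -
  have key: "(x - z*e + M*e + 1) * a = (N - (y + f*z)) * b"
    using eq unfolding c by (simp add: algebra_simps)
  then have "a dvd N - (y + f*z)"
    using cop by (metis coprime_dvd_mult_left_iff dvd_triv_right)
  then obtain t where t: "N - (y + f*z) = a*t"
    by (elim dvdE)
  have "(x - z*e + M*e + 1) * a = (t*b) * a"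
    using key unfolding t by (simp add: algebra_simps)
  with a have "x - z*e + M*e + 1 = t*b"
    by simp
  with t show thesis
    by (rule that)
qed

(* With t as in reprs_mod_a: t \<ge> 2 makes y + f z negative, t = 0 makes z too large,
   and t < 0 is incompatible with 2 a e \<le> f b; so t = 1. *)
lemma reprs_sum_eq:
  fixes a b c e f M N x y z :: int
  assumes a: "0 < a" and e: "1 \<le> e" and f: "1 \<le> f" and fb: "2*a*e \<le> f*b"
    and cop: "coprime a b" and c: "c = f*b - e*a"
    and N_lt: "N < 2*a" "N < f*(M + 1)" and N_le: "N \<le> f*M + a"
    and xyz: "(x, y, z) \<in> reprs a b c (N*b - M*a*e - a)"
  shows "y + f*z = N - a"
proof -
  from xyz have x: "0 \<le> x" and y: "0 \<le> y" and z: "0 \<le> z"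
    and eq: "a*x + b*y + c*z = N*b - M*a*e - a"
    by (auto simp: reprs_def)
  obtain t where t: "N - (y + f*z) = a*t" and xt: "x - z*e + M*e + 1 = t*b"
    using reprs_mod_a[OF a cop c eq] .
  have s: "0 \<le> y + f*z"
    using y z f by simp
  consider "2 \<le> t" | "t = 1" | "t = 0" | "t \<le> -1"
    by linarith
  then show ?thesis
  proof cases
    case 1
    with a have "a*2 \<le> a*t"
      by (intro mult_left_mono) simp_all
    with t s N_lt show ?thesis
      by linarith
  next
    case 2
    with t show ?thesis
      by simp
  next
    case 3
    with xt x have "M*e < z*e"
      by simp
    with e have "M + 1 \<le> z"
      by (simp add: mult_less_cancel_right)
    with f have "f*(M + 1) \<le> f*z"
      by (simp add: mult_left_mono)
    with t 3 y N_lt show ?thesis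
      by simp
  next
    case 4
    define m where "m = -t"
    have m: "1 \<le> m"
      using 4 by (simp add: m_def)
    have "f*(M*e + 1 + m*b) \<le> f*(z*e)"
      using xt x f by (intro mult_left_mono) (simp_all add: m_def algebra_simps)
    also have "\<dots> = e*(f*z)"
      by simp
    also have "\<dots> \<le> e*(N + m*a)"
      using t y e by (intro mult_left_mono) (simp_all add: m_def algebra_simps)
    finally have "f*M*e + f + m*(f*b) \<le> e*N + m*(a*e)"
      by (simp add: algebra_simps)
    moreover have "m*(2*a*e) \<le> m*(f*b)"
      using fb m by (intro mult_left_mono) simp_all
    moreover have "1*(a*e) \<le> m*(a*e)"
      using m a e by (intro mult_right_mono) simp_all
    moreover have "e*(N - f*M - a) \<le> 0"
      using N_le e by (simp add: mult_nonneg_nonpos)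
    ultimately have False
      using f by (simp add: algebra_simps)
    then show ?thesis ..
  qed
qed

lemma card_le_card_reprs:
  assumes "0 < a" "0 < b" "0 < c" and "Z \<subseteq> (\<lambda>(x, y, z). z) ` reprs a b c n"
  shows "card Z \<le> card (reprs a b c n)"
proof -
  have fin: "finite (reprs a b c n)"
    using assms(1-3) by (rule finite_reprs)
  then have "card Z \<le> card ((\<lambda>(x, y, z). z) ` reprs a b c n)"
    using assms(4) by (intro card_mono) simp_all
  also have "\<dots> \<le> card (reprs a b c n)"
    using fin by (rule card_image_le)
  finally show ?thesis .
qed

locale frobenius_triple =
  fixes a b c e f r h p :: int
  assumes a_eq: "a = r*f + h" and h_pos: "1 \<le> h" and h_le: "h \<le> f"
    and r_pos: "1 \<le> r" and p_nonneg: "0 \<le> p" and p_le: "p \<le> r"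
    and f_pos: "1 \<le> f" and e_pos: "1 \<le> e"
    and two_ae_le: "2*a*e \<le> f*b" and coprime_ab: "coprime a b" and c_eq: "c = f*b - e*a"
begin

definition cand1 :: int where
  "cand1 = (h - 1)*b + (r + p)*c - a"

definition cand2 :: int where
  "cand2 = (f - 1)*b + (r + p - 1)*c - a"

lemma f_le_rf: "f \<le> r*f"
  using r_pos f_pos by simp

lemma pf_le_rf: "p*f \<le> r*f"
  using p_le f_pos by (simp add: mult_right_mono)

lemma a_pos: "0 < a"
  using a_eq f_le_rf f_pos h_pos by linarith

lemma ae_pos: "0 < a*e"
  using a_pos e_pos by simp

lemma b_pos: "0 < b"
proof -
  have "0 < f*b"
    using two_ae_le ae_pos by linarith
  with f_pos show ?thesis
    by (simp add: zero_less_mult_iff)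
qed

lemma c_pos: "0 < c"
proof -
  have "e*a = a*e"
    by simp
  with two_ae_le ae_pos c_eq show ?thesis
    by linarith
qed

lemma two_re_le_b: "2*r*e \<le> b"
proof -
  have "f*(2*r*e) = 2*(r*f)*e"
    by simp
  also have "\<dots> \<le> 2*a*e"
    using a_eq h_pos e_pos by simp
  finally have "f*(2*r*e) \<le> f*b"
    using two_ae_le by linarith
  with f_pos show ?thesis
    by simp
qed

lemma cand1_eq: "cand1 = (p*f + a - 1)*b - (p + r)*a*e - a"
  unfolding cand1_def by (simp add: c_eq a_eq algebra_simps)

lemma cand2_eq: "cand2 = ((p + r)*f - 1)*b - (p + r - 1)*a*e - a"
  unfolding cand2_def by (simp add: c_eq a_eq algebra_simps)

lemma max_cand: "max cand1 cand2 = (if e*a \<le> h*b then cand1 else cand2)"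
proof -
  have "cand2 - cand1 = e*a - h*b"
    unfolding cand1_def cand2_def by (simp add: c_eq algebra_simps)
  then show ?thesis
    by (simp add: max_def)
qed

lemma card_reprs_cand1_le: "card (reprs a b c cand1) \<le> nat p"
proof (rule card_reprs_le)
  fix x y z
  assume xyz: "(x, y, z) \<in> reprs a b c cand1"
  have "f*(p + r + 1) = p*f + r*f + f" "f*(p + r) = p*f + r*f"
    by (simp_all add: algebra_simps)
  then have "p*f + a - 1 < 2*a" "p*f + a - 1 < f*(p + r + 1)" "p*f + a - 1 \<le> f*(p + r) + a"
    using pf_le_rf a_eq h_pos h_le f_le_rf by linarith+
  from reprs_sum_eq[OF a_pos e_pos f_pos two_ae_le coprime_ab c_eq this xyz[unfolded cand1_eq]]
  show "y + f*z = p*f - 1"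
    by simp
qed (use a_pos f_pos in simp_all)

lemma card_reprs_cand2_le: "card (reprs a b c cand2) \<le> nat p"
proof (rule card_reprs_le)
  fix x y z
  assume xyz: "(x, y, z) \<in> reprs a b c cand2"
  define M where "M = p + r - 1"
  have "(M + 1)*f = p*f + r*f" "(M + 1)*f = f*M + f"
    by (simp_all add: M_def algebra_simps)
  then have "(M + 1)*f - 1 < 2*a" "(M + 1)*f - 1 < f*(M + 1)" "(M + 1)*f - 1 \<le> f*M + a"
    using pf_le_rf a_eq h_pos f_le_rf by (linarith, simp add: mult.commute, linarith)
  moreover have "cand2 = ((M + 1)*f - 1)*b - M*a*e - a"
    by (simp add: cand2_eq M_def)
  ultimately have "y + f*z = ((M + 1)*f - 1) - a"
    using reprs_sum_eq[OF a_pos e_pos f_pos two_ae_le coprime_ab c_eq] xyz by metis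
  then show "y + f*z = p*f - h - 1"
    using a_eq by (simp add: M_def algebra_simps)
qed (use a_pos f_pos h_pos in simp_all)

lemma chain_subset_reprs:
  assumes n: "n = s*b + w*a" and z0: "0 \<le> z0" "0 \<le> w + z0*e" and z1: "f*z1 \<le> s"
  shows "{z0..z1} \<subseteq> (\<lambda>(x, y, z). z) ` reprs a b c n"
proof
  fix z
  assume z: "z \<in> {z0..z1}"
  have "z0*e \<le> z*e" "f*z \<le> f*z1"
    using z e_pos f_pos by (simp_all add: mult_right_mono mult_left_mono)
  then have "(w + z*e, s - f*z, z) \<in> reprs a b c n"
    using n z0 z1 z unfolding reprs_def c_eq by (simp add: algebra_simps)
  then show "z \<in> (\<lambda>(x, y, z). z) ` reprs a b c n"
    by force
qed

lemma chain_start_nonneg_of_le: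
  assumes n: "n = s*b + w*a" and s: "s = q*f + u" "s < a" and u: "u < f"
    and pq: "p \<le> q" and qr: "q \<le> r" and n1: "cand1 < n" and n2: "cand2 < n"
  shows "0 \<le> w + (q - p)*e"
proof (rule ccontr)
  assume "\<not> ?thesis"
  then have "(w + (q - p)*e + 1)*a \<le> 0"
    using a_pos by (intro mult_nonpos_nonneg) simp_all
  then have n_le: "n \<le> s*b - (q - p)*e*a - a"
    using n by (simp add: algebra_simps)
  have D: "0 \<le> p*(f*b - 2*a*e)"
    using p_nonneg two_ae_le by simp
  show False
  proof (cases "q = r")
    case True
    have "s*b \<le> (a - 1)*b"
      using s b_pos by (intro mult_right_mono) simp_all
    moreover have "cand1 = (a - 1)*b - (q - p)*e*a - a + p*(f*b - 2*a*e)"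
      using True by (simp add: cand1_eq algebra_simps)
    ultimately show False
      using n_le n1 D by linarith
  next
    case False
    have "s*b \<le> (q*f + f - 1)*b"
      using s u b_pos by (intro mult_right_mono) simp_all
    moreover have "0 \<le> (r - q - 1)*(f*b - a*e)"
      using False qr two_ae_le ae_pos by (intro mult_nonneg_nonneg) simp_all
    moreover have "cand2 = (q*f + f - 1)*b - (q - p)*e*a - a + (r - q - 1)*(f*b - a*e)
        + p*(f*b - 2*a*e)"
      by (simp add: cand2_eq algebra_simps)
    ultimately show False
      using n_le n2 D by linarith
  qed
qed

lemma card_reprs_gt_of_le:
  assumes n: "n = s*b + w*a" and s: "s = q*f + u" "s < a" and u: "0 \<le> u" "u < f"
    and pq: "p \<le> q" and qr: "q \<le> r" and n1: "cand1 < n" and n2: "cand2 < n"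
  shows "nat p < card (reprs a b c n)"
proof -
  have "0 \<le> w + (q - p)*e"
    using n s u(2) pq qr n1 n2 by (rule chain_start_nonneg_of_le)
  moreover have "f*q \<le> s"
    using s u by (simp add: mult.commute)
  ultimately have "card {q - p..q} \<le> card (reprs a b c n)"
    using pq by (intro card_le_card_reprs[OF a_pos b_pos c_pos] chain_subset_reprs[OF n]) simp_all
  then show ?thesis
    using p_nonneg by simp
qed

lemma chain_start_nonneg_of_less:
  assumes n: "n = s*b + w*a" and s: "s = q*f + u" and u: "0 \<le> u" "u < f"
    and qp: "q < p" and n1: "cand1 < n" and n2: "cand2 < n"
  shows "0 \<le> w - b + (2*q + r + (if f \<le> u + h then 1 else 0) - p + 1)*e"
proof (rule ccontr)
  define K where "K = 2*q + r + (if f \<le> u + h then 1 else 0) - p + 1"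
  assume "\<not> ?thesis"
  then have "(w - b + K*e + 1)*a \<le> 0"
    using a_pos by (intro mult_nonpos_nonneg) (simp_all add: K_def)
  then have n_le: "n \<le> s*b + (b - K*e)*a - a"
    using n by (simp add: algebra_simps)
  have D: "0 \<le> (p - q - 1)*(f*b - 2*a*e)"
    using qp two_ae_le by simp
  show False
  proof (cases "f \<le> u + h")
    case True
    have "s*b \<le> (q*f + f - 1)*b"
      using s u b_pos by (intro mult_right_mono) simp_all
    moreover have "cand1 = (q*f + f - 1)*b + (b - K*e)*a - a + (p - q - 1)*(f*b - 2*a*e)"
      using True by (simp add: K_def cand1_eq algebra_simps)
    ultimately show False
      using n_le n1 D by linarith
  next
    case False
    have "s*b \<le> (q*f + f - h - 1)*b"
      using s False b_pos by (intro mult_right_mono) simp_all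
    moreover have "cand2 = (q*f + f - h - 1)*b + (b - K*e)*a - a + (p - q - 1)*(f*b - 2*a*e)"
      unfolding cand2_eq using False a_eq by (simp add: K_def algebra_simps)
    ultimately show False
      using n_le n2 D by linarith
  qed
qed

(* Two chains: z \<in> {0..q} from n = s b + w a, and z \<in> {K..q + r + d} from
   n = (s + a) b + (w - b) a, whose top is the largest z with f z \<le> s + a;
   K is chosen so that the second chain has p - q members. *)
lemma card_reprs_gt_of_less:
  assumes n: "n = s*b + w*a" and s: "s = q*f + u" and u: "0 \<le> u" "u < f" and q: "0 \<le> q"
    and qp: "q < p" and n1: "cand1 < n" and n2: "cand2 < n"
  shows "nat p < card (reprs a b c n)"
proof -
  define d :: int where "d = (if f \<le> u + h then 1 else 0)"
  define K where "K = 2*q + r + d - p + 1"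
  have x: "0 \<le> w - b + K*e"
    using chain_start_nonneg_of_less[OF n s u qp n1 n2] by (simp add: K_def d_def)
  have d: "d*f \<le> u + h" "0 \<le> d" "d \<le> 1"
    using u h_pos by (simp_all add: d_def)
  have "K*e \<le> (2*r)*e"
    using qp p_le d e_pos by (intro mult_right_mono) (simp_all add: K_def)
  with x two_re_le_b have w: "0 \<le> w"
    by linarith
  have "{0..q} \<subseteq> (\<lambda>(x, y, z). z) ` reprs a b c n"
    using w s u by (intro chain_subset_reprs[OF n]) (simp_all add: mult.commute)
  moreover have "{K..q + r + d} \<subseteq> (\<lambda>(x, y, z). z) ` reprs a b c n"
  proof (rule chain_subset_reprs)
    show "n = (s + a)*b + (w - b)*a"
      using n by (simp add: algebra_simps)
    show "0 \<le> K"
      using q p_le d by (simp add: K_def)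
    show "f*(q + r + d) \<le> s + a"
      using s a_eq d by (simp add: algebra_simps)
  qed (rule x)
  ultimately have "card ({0..q} \<union> {K..q + r + d}) \<le> card (reprs a b c n)"
    by (intro card_le_card_reprs[OF a_pos b_pos c_pos]) simp
  moreover have "q < K"
    using q p_le d by (simp add: K_def)
  then have "card ({0..q} \<union> {K..q + r + d}) = card {0..q} + card {K..q + r + d}"
    by (intro card_Un_disjoint) auto
  ultimately show ?thesis
    using q qp by (simp add: K_def)
qed

lemma card_reprs_gt:
  assumes "max cand1 cand2 < n"
  shows "nat p < card (reprs a b c n)"
proof -
  obtain s w where n: "n = s*b + w*a" and s: "0 \<le> s" "s < a"
    using coprime_repr_bounded[OF a_pos coprime_ab] .
  define q u where "q = s div f" and "u = s mod f"
  have su: "s = q*f + u" and u: "0 \<le> u" "u < f"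
    using f_pos by (simp_all add: q_def u_def)
  have q: "0 \<le> q"
    using s f_pos by (simp add: q_def pos_imp_zdiv_nonneg_iff)
  have "q*f < (r + 1)*f"
    using su u s a_eq h_le by (simp add: algebra_simps)
  then have qr: "q \<le> r"
    using f_pos by (simp add: mult_less_cancel_right)
  from assms have n1: "cand1 < n" and n2: "cand2 < n"
    by simp_all
  show ?thesis
  proof (cases "p \<le> q")
    case True
    with n su s(2) u qr n1 n2 show ?thesis
      by (intro card_reprs_gt_of_le)
  next
    case False
    then show ?thesis
      using card_reprs_gt_of_less[OF n su u q _ n1 n2] by simp
  qed
qed

lemma greatest_card_reprs_le: "(GREATEST n. card (reprs a b c n) \<le> nat p) = max cand1 cand2"
proof (rule Greatest_equality)
  show "card (reprs a b c (max cand1 cand2)) \<le> nat p"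
    using card_reprs_cand1_le card_reprs_cand2_le by (simp add: max_def)
next
  fix n
  assume "card (reprs a b c n) \<le> nat p"
  then show "n \<le> max cand1 cand2"
    using card_reprs_gt by (meson not_le)
qed

end

lemma frobenius_triple_lucas:
  assumes k: "3 \<le> k" and r: "r = (int (lucas i) - 1) div int (fib k)"
    and p: "int p \<le> r" "(r, int p) \<noteq> (0, 0)"
  shows "frobenius_triple (int (lucas i)) (int (lucas (i + 2))) (int (lucas (i + k)))
    (int (fib (k - 2))) (int (fib k)) r (int (lucas i) - r * int (fib k)) (int p)"
proof
  define a f where "a = int (lucas i)" and "f = int (fib k)"
  have f_pos: "1 \<le> f"
    using k fib_neq_0_nat[of k] by (simp add: f_def)
  have "0 \<le> (a - 1) mod f" "(a - 1) mod f < f"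
    using f_pos by simp_all
  moreover have "a - r*f = (a - 1) mod f + 1"
    by (simp add: r a_def f_def minus_div_mult_eq_mod[symmetric])
  ultimately show "1 \<le> int (lucas i) - r * int (fib k)" "int (lucas i) - r * int (fib k) \<le> int (fib k)"
    unfolding a_def f_def by linarith+
  show "1 \<le> int (fib k)"
    using f_pos by (simp add: f_def)
  show "1 \<le> r" "0 \<le> int p" "int p \<le> r"
    using p by auto
  show "1 \<le> int (fib (k - 2))"
    using k fib_neq_0_nat[of "k - 2"] by simp
  have "2 * fib (k - 2) * lucas i \<le> fib k * lucas (i + 2)"
    using k by (intro two_fib_lucas_le) simp
  then have "int (2 * fib (k - 2) * lucas i) \<le> int (fib k * lucas (i + 2))"
    by (simp only: of_nat_le_iff)
  then show "2 * int (lucas i) * int (fib (k - 2)) \<le> int (fib k) * int (lucas (i + 2))"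
    unfolding of_nat_mult of_nat_numeral by (simp only: ac_simps)
  show "coprime (int (lucas i)) (int (lucas (i + 2)))"
    unfolding coprime_int_iff by (rule coprime_lucas_add2)
  show "int (lucas (i + k)) = int (fib k) * int (lucas (i + 2)) - int (fib (k - 2)) * int (lucas i)"
    using k by (intro lucas_add_eq) simp
qed simp

theorem theorem9:
  fixes i k p :: nat
  assumes "i \<ge> 3" and "k \<ge> 3"
  defines "r \<equiv> (int (lucas i) - 1) div int (fib k)"
  assumes "r \<ge> int p" and "(r, int p) \<noteq> (0, 0)"
  shows "p_frobenius p [lucas i, lucas (i + 2), lucas (i + k)] =
    (if (int (lucas i) - r * int (fib k)) * int (lucas (i + 2)) \<ge> int (fib (k - 2)) * int (lucas i)
     then (int (lucas i) - r * int (fib k) - 1) * int (lucas (i + 2))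
            + (r + int p) * int (lucas (i + k)) - int (lucas i)
     else (int (fib k) - 1) * int (lucas (i + 2))
            + (r + int p - 1) * int (lucas (i + k)) - int (lucas i))"
proof -
  interpret frobenius_triple "int (lucas i)" "int (lucas (i + 2))" "int (lucas (i + k))"
    "int (fib (k - 2))" "int (fib k)" r "int (lucas i) - r * int (fib k)" "int p"
    using assms(2,4,5) by (intro frobenius_triple_lucas) (simp_all add: r_def)
  have "p_frobenius p [lucas i, lucas (i + 2), lucas (i + k)]
      = (GREATEST n. card (reprs (int (lucas i)) (int (lucas (i + 2))) (int (lucas (i + k))) n)
          \<le> nat (int p))"
    by (simp add: p_frobenius_def num_repr_eq_card_reprs)
  also have "\<dots> = max cand1 cand2"
    by (rule greatest_card_reprs_le)
  also have "\<dots> = (if int (fib (k - 2)) * int (lucas i)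
      \<le> (int (lucas i) - r * int (fib k)) * int (lucas (i + 2)) then cand1 else cand2)"
    by (rule max_cand)
  finally show ?thesis
    unfolding cand1_def cand2_def .
qed

end
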